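(* Let $Y$ be an indeterminate adjunction space with core space $X$, attachment spaces $\{A_j\}_{j\in\mathbb{N}}$ and attachment points $\{x_j\}_{j\in\mathbb{N}}$. If $Z\subseteq Y$ is a subspace that is a Peano continuum and meets $X$ and each set $A_j\setminus\{x_j\}$, then $Z$ is homeomorphic to the shrinking adjunction space $\operatorname{\bf Adj}(Z\cap X,x_j,Z\cap A_j,x_j)$ obtained by attaching the spaces $\{Z\cap A_j\}_{j\in\mathbb{N}}$ to $Z\cap X$ along the points $\{x_j\}_{j\in\mathbb{N}}$.
   Context: All spaces Hausdorff; Peano continuum = connected, locally path-connected compact metric space. $Y$ is an indeterminate adjunction space with core $X$, attachment spaces $\{A_j\}_{j\in J}$ and attachment points $\{x_j\}_{j\in J}$ if $X$ is a closed subspace of $Y$ and $Y\setminus X$ is the disjoint union of open sets $N_j$ ($j\in J$) with $A_j=\overline{N_j}$ and $A_j\cap X=\{x_j\}$ for all $j$. The shrinking adjunction space $\operatorname{\bf Adj}(X',x_j,A'_j,x_j)$ is $\varprojlim_k Y_k\subseteq\prod_k Y_k$ where $Y_k$ is the adjunction space from $X'\sqcup A'_1\sqcup\dots\sqcup A'_k$ identifying the basepoint $x_j\in A'_j$ with $x_j\in X'$, and $Y_{k+1}\to Y_k$ collapses $A'_{k+1}$ to $x_{k+1}$. *)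

theory Defs
  imports "HOL-Analysis.Analysis"
begin

definition quotient_topology :: "'a topology \<Rightarrow> ('a \<Rightarrow> 'b) \<Rightarrow> 'b topology" where
  "quotient_topology T f =
     topology (\<lambda>U. U \<subseteq> f ` topspace T \<and> openin T {p \<in> topspace T. f p \<in> U})"

lemma istopology_quotient:
  "istopology (\<lambda>U. U \<subseteq> f ` topspace T \<and> openin T {p \<in> topspace T. f p \<in> U})"
  unfolding istopology_def
proof (rule conjI; intro allI impI)
  fix S U
  assume a: "S \<subseteq> f ` topspace T \<and> openin T {p \<in> topspace T. f p \<in> S}"
     and b: "U \<subseteq> f ` topspace T \<and> openin T {p \<in> topspace T. f p \<in> U}"
  have e: "{p \<in> topspace T. f p \<in> S \<inter> U} =
      {p \<in> topspace T. f p \<in> S} \<inter> {p \<in> topspace T. f p \<in> U}" by blast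
  show "S \<inter> U \<subseteq> f ` topspace T \<and> openin T {p \<in> topspace T. f p \<in> S \<inter> U}"
    using a b unfolding e by auto
next
  fix K
  assume K: "\<forall>S\<in>K. S \<subseteq> f ` topspace T \<and> openin T {p \<in> topspace T. f p \<in> S}"
  have e: "{p \<in> topspace T. f p \<in> \<Union>K} = (\<Union>S\<in>K. {p \<in> topspace T. f p \<in> S})" by blast
  show "\<Union>K \<subseteq> f ` topspace T \<and> openin T {p \<in> topspace T. f p \<in> \<Union>K}"
    using K unfolding e by auto
qed
lemma openin_quotient_topology:
  "openin (quotient_topology T f) U \<longleftrightarrow>
     U \<subseteq> f ` topspace T \<and> openin T {p \<in> topspace T. f p \<in> U}"
  unfolding quotient_topology_def by (simp only: topology_inverse'[OF istopology_quotient])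

definition peano_continuum :: "'a topology \<Rightarrow> bool" where
  "peano_continuum T \<longleftrightarrow> topspace T \<noteq> {} \<and> compact_space T \<and> connected_space T \<and>
      locally_path_connected_space T \<and> metrizable_space T"

definition indeterminate_adjunction ::
  "'a topology \<Rightarrow> 'a set \<Rightarrow> (nat \<Rightarrow> 'a set) \<Rightarrow> (nat \<Rightarrow> 'a) \<Rightarrow> bool" where
  "indeterminate_adjunction Y X A x \<longleftrightarrow>
     closedin Y X \<and>
     (\<exists>N :: nat \<Rightarrow> 'a set.
        (\<forall>j. openin Y (N j)) \<and>
        (\<forall>i j. i \<noteq> j \<longrightarrow> N i \<inter> N j = {}) \<and>
        (\<Union>j. N j) = topspace Y - X \<and>
        (\<forall>j. A j = Y closure_of (N j)) \<and>
        (\<forall>j. A j \<inter> X = {x j}))"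

text \<open>Finite stage k: the disjoint union of the core X' (tag None) and A'_j for
  j < k (tag Some j), with the basepoint x j of A'_j identified with x j of X'.\<close>

definition adj_pieces :: "'a topology \<Rightarrow> (nat \<Rightarrow> 'a topology) \<Rightarrow> nat option \<Rightarrow> 'a topology" where
  "adj_pieces X' A' i = (case i of None \<Rightarrow> X' | Some j \<Rightarrow> A' j)"

definition adj_sum :: "'a topology \<Rightarrow> (nat \<Rightarrow> 'a topology) \<Rightarrow> nat \<Rightarrow> (nat option \<times> 'a) topology" where
  "adj_sum X' A' k = sum_topology (adj_pieces X' A') (insert None (Some ` {..<k}))"

text \<open>The glued point in the core represented by a point of the disjoint union, if any.\<close>
definition adj_gp :: "(nat \<Rightarrow> 'a) \<Rightarrow> nat option \<times> 'a \<Rightarrow> 'a option" where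
  "adj_gp x r = (case fst r of None \<Rightarrow> Some (snd r)
                  | Some j \<Rightarrow> (if snd r = x j then Some (snd r) else None))"

definition adj_rel :: "(nat \<Rightarrow> 'a) \<Rightarrow> nat option \<times> 'a \<Rightarrow> nat option \<times> 'a \<Rightarrow> bool" where
  "adj_rel x r s \<longleftrightarrow> r = s \<or> (adj_gp x r = adj_gp x s \<and> adj_gp x r \<noteq> None)"

definition adj_class ::
  "'a topology \<Rightarrow> (nat \<Rightarrow> 'a) \<Rightarrow> (nat \<Rightarrow> 'a topology) \<Rightarrow> nat \<Rightarrow> nat option \<times> 'a \<Rightarrow> (nat option \<times> 'a) set" where
  "adj_class X' x A' k r = {s \<in> topspace (adj_sum X' A' k). adj_rel x r s}"

definition adj_stage ::
  "'a topology \<Rightarrow> (nat \<Rightarrow> 'a) \<Rightarrow> (nat \<Rightarrow> 'a topology) \<Rightarrow> nat \<Rightarrow> (nat option \<times> 'a) set topology" where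
  "adj_stage X' x A' k = quotient_topology (adj_sum X' A' k) (adj_class X' x A' k)"

text \<open>Bonding map Y_(k+1) \<rightarrow> Y_k collapsing A'_k to x k.\<close>
definition adj_collapse :: "(nat \<Rightarrow> 'a) \<Rightarrow> nat \<Rightarrow> nat option \<times> 'a \<Rightarrow> nat option \<times> 'a" where
  "adj_collapse x k r = (if fst r = Some k then (None, x k) else r)"

definition adj_bond ::
  "'a topology \<Rightarrow> (nat \<Rightarrow> 'a) \<Rightarrow> (nat \<Rightarrow> 'a topology) \<Rightarrow> nat \<Rightarrow>
     (nat option \<times> 'a) set \<Rightarrow> (nat option \<times> 'a) set" where
  "adj_bond X' x A' k c = (\<Union>r\<in>c. adj_class X' x A' k (adj_collapse x k r))"

text \<open>Shrinking adjunction space Adj(X', x_j, A'_j, x_j) as the inverse limit of the Y_k,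
  a subspace of the product of all Y_k.\<close>
definition shrinking_adjunction ::
  "'a topology \<Rightarrow> (nat \<Rightarrow> 'a) \<Rightarrow> (nat \<Rightarrow> 'a topology) \<Rightarrow> (nat \<Rightarrow> (nat option \<times> 'a) set) topology" where
  "shrinking_adjunction X' x A' =
     subtopology (product_topology (adj_stage X' x A') UNIV)
       {y. (\<forall>k. y k \<in> topspace (adj_stage X' x A' k)) \<and>
           (\<forall>k. adj_bond X' x A' k (y (Suc k)) = y k)}"

end

theory Submission
  imports Defs
begin

text \<open>Since \<open>Z\<close> is connected and meets both \<open>X\<close> and every \<open>N\<^sub>j = A\<^sub>j - {x\<^sub>j}\<close>, it contains
  every attachment point \<open>x\<^sub>j\<close>. Let \<open>\<rho>\<^sub>k\<close> retract \<open>Z\<close> onto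
  \<open>Z\<^sub>k = (Z \<inter> X) \<union> (Z \<inter> A\<^sub>0) \<union> \<dots> \<union> (Z \<inter> A\<^sub>k\<^sub>-\<^sub>1)\<close> by collapsing each \<open>N\<^sub>j\<close> with \<open>j \<ge> k\<close>
  to \<open>x\<^sub>j\<close>. These retractions commute with the bonding maps, so \<open>z \<mapsto> (\<rho>\<^sub>k z)\<^sub>k\<close> maps \<open>Z\<close>
  into the inverse limit. It is injective because \<open>\<rho>\<^sub>k z = z\<close> for large \<open>k\<close>, and surjective
  because every thread of the inverse limit is eventually constant. It is continuous because
  \<open>Z\<close> is locally connected: a connected neighbourhood of a point of \<open>X\<close> that meets \<open>N\<^sub>j\<close>
  contains \<open>x\<^sub>j\<close>, so collapsing every \<open>N\<^sub>j\<close> to \<open>x\<^sub>j\<close> is continuous. A continuous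
  bijection from the compact space \<open>Z\<close> onto the Hausdorff inverse limit is a homeomorphism.\<close>

lemma topspace_quotient_topology: "topspace (quotient_topology T f) = f ` topspace T"
proof -
  have "{p \<in> topspace T. f p \<in> f ` topspace T} = topspace T"
    by auto
  then have "openin (quotient_topology T f) (f ` topspace T)"
    by (simp add: openin_quotient_topology)
  then have "f ` topspace T \<subseteq> topspace (quotient_topology T f)"
    by (rule openin_subset)
  moreover have "topspace (quotient_topology T f) \<subseteq> f ` topspace T"
    using openin_quotient_topology[of T f "topspace (quotient_topology T f)"] by auto
  ultimately show ?thesis by blast
qed

lemma quotient_map_quotient_topology: "quotient_map T (quotient_topology T f) f"
  unfolding quotient_map_def topspace_quotient_topology openin_quotient_topology by auto

lemma backward_recursion_unique:
  assumes p: "\<And>k. p k = f k (p (Suc k))" and q: "\<And>k. q k = f k (q (Suc k))"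
    and eventually_eq: "\<And>k. m \<le> k \<Longrightarrow> p k = q k"
  shows "p k = q k"
proof -
  have "m \<le> k + n \<Longrightarrow> p k = q k" for n k
  proof (induction n arbitrary: k)
    case 0
    then show ?case using eventually_eq by simp
  next
    case (Suc n)
    then have "p (Suc k) = q (Suc k)" by simp
    then show ?case using p q by metis
  qed
  then show ?thesis by (meson le_add2)
qed

lemma continuous_map_snd_sum_subtopology:
  "continuous_map (sum_topology (\<lambda>i. subtopology Y (S i)) I) Y snd"
  unfolding continuous_map_def
proof (intro conjI allI impI)
  show "snd \<in> topspace (sum_topology (\<lambda>i. subtopology Y (S i)) I) \<rightarrow> topspace Y"
    by auto
  fix V
  assume V: "openin Y V"
  let ?Q = "{r \<in> topspace (sum_topology (\<lambda>i. subtopology Y (S i)) I). snd r \<in> V}"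
  have "{a. (i, a) \<in> ?Q} = V \<inter> S i" if "i \<in> I" for i
    using that openin_subset[OF V] by auto
  then show "openin (sum_topology (\<lambda>i. subtopology Y (S i)) I) ?Q"
    unfolding openin_sum_topology by (auto simp: openin_subtopology_Int[OF V])
qed

locale subspace_adjunction =
  fixes Y :: "'a topology" and C :: "'a set" and B :: "nat \<Rightarrow> 'a set" and x :: "nat \<Rightarrow> 'a"
  assumes core_subset: "C \<subseteq> topspace Y"
    and piece_subset: "\<And>j. B j \<subseteq> topspace Y"
    and attachment_in_core: "\<And>j. x j \<in> C"
    and core_Int_piece: "\<And>j. C \<inter> B j \<subseteq> {x j}"
    and piece_Int_piece: "\<And>i j. i \<noteq> j \<Longrightarrow> B i \<inter> B j \<subseteq> {x i}"
begin

abbreviation core :: "'a topology" where "core \<equiv> subtopology Y C"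
abbreviation pieces :: "nat \<Rightarrow> 'a topology" where "pieces \<equiv> \<lambda>j. subtopology Y (B j)"
abbreviation stage :: "nat \<Rightarrow> (nat option \<times> 'a) set topology" where
  "stage \<equiv> adj_stage core x pieces"
abbreviation Adj :: "(nat \<Rightarrow> (nat option \<times> 'a) set) topology" where
  "Adj \<equiv> shrinking_adjunction core x pieces"

definition attached :: "nat \<Rightarrow> 'a set" where
  "attached k = C \<union> (\<Union>j<k. B j)"

text \<open>Every equivalence class of the stage \<open>k\<close> is the set of all tagged copies of a single point
  of \<open>attached k\<close> (lemma \<open>adj_class_eq_fibre\<close>).\<close>
definition fibre :: "nat \<Rightarrow> 'a \<Rightarrow> (nat option \<times> 'a) set" where
  "fibre k p = {r \<in> topspace (adj_sum core pieces k). snd r = p}"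

definition bond_point :: "nat \<Rightarrow> 'a \<Rightarrow> 'a" where
  "bond_point k p = (if p \<in> attached k then p else x k)"

lemma core_piece_point: "a \<in> C \<Longrightarrow> a \<in> B j \<Longrightarrow> a = x j"
  using core_Int_piece[of j] by blast

lemma piece_piece_point: "a \<in> B i \<Longrightarrow> a \<in> B j \<Longrightarrow> i \<noteq> j \<Longrightarrow> a = x i \<and> a = x j"
  using piece_Int_piece[of i j] piece_Int_piece[of j i] by blast

lemma mem_adj_sum_iff:
  "r \<in> topspace (adj_sum core pieces k) \<longleftrightarrow>
     (fst r = None \<and> snd r \<in> C) \<or> (\<exists>j<k. fst r = Some j \<and> snd r \<in> B j)"
proof -
  have "topspace (adj_pieces core pieces i) = (case i of None \<Rightarrow> C | Some j \<Rightarrow> B j)" for i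
    using core_subset piece_subset by (simp add: adj_pieces_def Int_absorb1 split: option.split)
  then show ?thesis
    by (cases r) (auto simp: adj_sum_def split: option.splits)
qed

lemma adj_gp_shared_point:
  assumes "r \<in> topspace (adj_sum core pieces k)" "s \<in> topspace (adj_sum core pieces k)"
    and "snd r = snd s" "fst r \<noteq> fst s"
  shows "adj_gp x r = Some (snd r)"
proof (cases "fst r")
  case None
  then show ?thesis by (simp add: adj_gp_def)
next
  case (Some j)
  then have "snd r \<in> B j"
    using assms(1) by (auto simp: mem_adj_sum_iff)
  moreover have "snd r \<in> C \<or> (\<exists>i. i \<noteq> j \<and> snd r \<in> B i)"
    using assms(2-4) Some by (auto simp: mem_adj_sum_iff)
  ultimately have "snd r = x j"
    using core_piece_point piece_piece_point by blast
  then show ?thesis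
    using Some by (simp add: adj_gp_def)
qed

lemma adj_rel_iff_snd_eq:
  assumes r: "r \<in> topspace (adj_sum core pieces k)" and s: "s \<in> topspace (adj_sum core pieces k)"
  shows "adj_rel x r s \<longleftrightarrow> snd r = snd s"
proof
  assume "adj_rel x r s"
  then show "snd r = snd s"
    unfolding adj_rel_def adj_gp_def by (auto split: option.splits if_splits)
next
  assume eq: "snd r = snd s"
  show "adj_rel x r s"
  proof (cases "fst r = fst s")
    case True
    then show ?thesis using eq by (simp add: adj_rel_def prod_eq_iff)
  next
    case False
    then show ?thesis
      using eq adj_gp_shared_point[OF r s] adj_gp_shared_point[OF s r] by (simp add: adj_rel_def)
  qed
qed

lemma adj_class_eq_fibre:
  assumes "r \<in> topspace (adj_sum core pieces k)"
  shows "adj_class core x pieces k r = fibre k (snd r)"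
  unfolding adj_class_def fibre_def using adj_rel_iff_snd_eq[OF assms] by auto

lemma snd_image_adj_sum: "snd ` topspace (adj_sum core pieces k) = attached k"
proof
  show "snd ` topspace (adj_sum core pieces k) \<subseteq> attached k"
    by (auto simp: mem_adj_sum_iff attached_def)
  show "attached k \<subseteq> snd ` topspace (adj_sum core pieces k)"
  proof
    fix p
    assume "p \<in> attached k"
    then have "(None, p) \<in> topspace (adj_sum core pieces k) \<or>
        (\<exists>j. (Some j, p) \<in> topspace (adj_sum core pieces k))"
      by (auto simp: mem_adj_sum_iff attached_def)
    then show "p \<in> snd ` topspace (adj_sum core pieces k)"
      by (metis image_eqI snd_conv)
  qed
qed

lemma snd_image_fibre: "p \<in> attached k \<Longrightarrow> snd ` fibre k p = {p}"
  using snd_image_adj_sum unfolding fibre_def by force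

definition fibre_point :: "(nat option \<times> 'a) set \<Rightarrow> 'a" where
  "fibre_point c = the_elem (snd ` c)"

lemma fibre_point_fibre: "p \<in> attached k \<Longrightarrow> fibre_point (fibre k p) = p"
  by (simp add: fibre_point_def snd_image_fibre)

lemma fibre_inject:
  assumes "p \<in> attached k" "fibre k p = fibre k q"
  shows "p = q"
proof -
  have "{p} = snd ` fibre k q"
    using snd_image_fibre[OF assms(1)] assms(2) by simp
  also have "\<dots> \<subseteq> {q}"
    unfolding fibre_def by auto
  finally show ?thesis by simp
qed

lemma topspace_adj_stage: "topspace (stage k) = fibre k ` attached k"
proof -
  have "topspace (stage k) = adj_class core x pieces k ` topspace (adj_sum core pieces k)"
    unfolding adj_stage_def topspace_quotient_topology ..
  also have "\<dots> = (\<lambda>r. fibre k (snd r)) ` topspace (adj_sum core pieces k)"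
    by (auto simp: adj_class_eq_fibre)
  also have "\<dots> = fibre k ` attached k"
    unfolding snd_image_adj_sum[symmetric] by (simp add: image_image)
  finally show ?thesis .
qed

lemma quotient_map_adj_stage:
  "quotient_map (adj_sum core pieces k) (stage k) (adj_class core x pieces k)"
  unfolding adj_stage_def by (rule quotient_map_quotient_topology)

lemma continuous_map_snd_adj_sum: "continuous_map (adj_sum core pieces k) Y snd"
proof -
  have "adj_pieces core pieces = (\<lambda>i. subtopology Y (case i of None \<Rightarrow> C | Some j \<Rightarrow> B j))"
    by (simp add: adj_pieces_def fun_eq_iff split: option.split)
  then show ?thesis
    by (simp add: adj_sum_def continuous_map_snd_sum_subtopology)
qed

lemma Hausdorff_space_adj_stage:
  assumes "Hausdorff_space Y"
  shows "Hausdorff_space (stage k)"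
proof (rule Hausdorff_space_injective_preimage[OF assms])
  have "continuous_map (adj_sum core pieces k) Y
      (fibre_point \<circ> adj_class core x pieces k)"
  proof (rule continuous_map_eq[OF continuous_map_snd_adj_sum])
    fix r
    assume r: "r \<in> topspace (adj_sum core pieces k)"
    then have "snd r \<in> attached k"
      using snd_image_adj_sum by blast
    then show "snd r = (fibre_point \<circ> adj_class core x pieces k) r"
      by (simp add: adj_class_eq_fibre[OF r] fibre_point_fibre)
  qed
  then show "continuous_map (stage k) Y fibre_point"
    by (rule continuous_compose_quotient_map[OF quotient_map_adj_stage])
  show "inj_on fibre_point (topspace (stage k))"
    by (auto simp: topspace_adj_stage inj_on_def fibre_point_fibre)
qed

lemma Hausdorff_space_shrinking_adjunction: "Hausdorff_space Y \<Longrightarrow> Hausdorff_space Adj"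
  unfolding shrinking_adjunction_def
  by (simp add: Hausdorff_space_subtopology Hausdorff_space_product_topology Hausdorff_space_adj_stage)

lemma continuous_map_fibre_adj_pieces:
  assumes i: "i \<in> insert None (Some ` {..<k})"
  shows "continuous_map (adj_pieces core pieces i) (stage k) (fibre k)"
proof -
  have tag: "continuous_map (adj_pieces core pieces i) (adj_sum core pieces k) (\<lambda>a. (i, a))"
    unfolding adj_sum_def using i by (rule continuous_map_component_injection)
  show ?thesis
  proof (rule continuous_map_eq[OF continuous_map_compose[OF tag
        quotient_imp_continuous_map[OF quotient_map_adj_stage]]])
    fix a
    assume "a \<in> topspace (adj_pieces core pieces i)"
    then have "(i, a) \<in> topspace (adj_sum core pieces k)"
      using i by (auto simp: adj_sum_def)
    then show "(adj_class core x pieces k \<circ> (\<lambda>a. (i, a))) a = fibre k a"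
      by (simp add: adj_class_eq_fibre)
  qed
qed

lemma adj_collapse_adj_sum:
  assumes "r \<in> topspace (adj_sum core pieces (Suc k))"
  shows "adj_collapse x k r \<in> topspace (adj_sum core pieces k)
    \<and> snd (adj_collapse x k r) = bond_point k (snd r)"
  using assms attachment_in_core core_piece_point piece_piece_point
  by (auto simp: adj_collapse_def bond_point_def mem_adj_sum_iff attached_def less_Suc_eq)

lemma adj_bond_fibre:
  assumes "p \<in> attached (Suc k)"
  shows "adj_bond core x pieces k (fibre (Suc k) p) = fibre k (bond_point k p)"
proof -
  have "adj_class core x pieces k (adj_collapse x k r) = fibre k (bond_point k p)"
    if "r \<in> fibre (Suc k) p" for r
    using that adj_collapse_adj_sum adj_class_eq_fibre unfolding fibre_def by auto
  moreover have "fibre (Suc k) p \<noteq> {}"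
    using snd_image_fibre[OF assms] by auto
  ultimately show ?thesis
    unfolding adj_bond_def by auto
qed

lemma topspace_shrinking_adjunction:
  "topspace Adj = {y. (\<forall>k. y k \<in> topspace (stage k)) \<and>
      (\<forall>k. adj_bond core x pieces k (y (Suc k)) = y k)}"
  unfolding shrinking_adjunction_def by (auto simp: PiE_UNIV_domain)

lemma thread_in_shrinking_adjunction:
  assumes attached: "\<And>k. p k \<in> attached k" and bond: "\<And>k. p k = bond_point k (p (Suc k))"
  shows "(\<lambda>k. fibre k (p k)) \<in> topspace Adj"
proof -
  have "adj_bond core x pieces k (fibre (Suc k) (p (Suc k))) = fibre k (p k)" for k
    using adj_bond_fibre[OF attached, of k] bond[of k] by simp
  then show ?thesis
    unfolding topspace_shrinking_adjunction topspace_adj_stage using attached by auto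
qed

lemma shrinking_adjunction_threadE:
  assumes "y \<in> topspace Adj"
  obtains p where "\<And>k. p k \<in> attached k" "\<And>k. p k = bond_point k (p (Suc k))"
    "y = (\<lambda>k. fibre k (p k))"
proof -
  have stage: "\<And>k. y k \<in> fibre k ` attached k"
    and bond: "\<And>k. adj_bond core x pieces k (y (Suc k)) = y k"
    using assms unfolding topspace_shrinking_adjunction topspace_adj_stage by auto
  define p where "p k = fibre_point (y k)" for k
  have attached: "p k \<in> attached k" and y: "y k = fibre k (p k)" for k
  proof -
    obtain q where "q \<in> attached k" "y k = fibre k q"
      using stage[of k] by blast
    then show "p k \<in> attached k" "y k = fibre k (p k)"
      by (simp_all add: p_def fibre_point_fibre)
  qed
  have "p k = bond_point k (p (Suc k))" for k
  proof -
    have "fibre k (p k) = adj_bond core x pieces k (fibre (Suc k) (p (Suc k)))"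
      using bond[of k] by (simp only: y)
    also have "\<dots> = fibre k (bond_point k (p (Suc k)))"
      using adj_bond_fibre[OF attached] .
    finally show ?thesis
      by (rule fibre_inject[OF attached])
  qed
  moreover have "y = (\<lambda>k. fibre k (p k))"
    using y by (rule ext)
  ultimately show ?thesis
    using attached that by blast
qed

text \<open>A thread leaves the core at most once and then stays at a fixed point.\<close>
lemma thread_eventually_constant:
  assumes "\<And>k. p k = bond_point k (p (Suc k))"
  obtains m where "\<And>k. m \<le> k \<Longrightarrow> p k = p m"
proof -
  have step_out: "p k \<notin> C \<Longrightarrow> p (Suc k) = p k" for k
    using assms[of k] attachment_in_core unfolding bond_point_def by metis
  have step_in: "p (Suc k) \<in> C \<Longrightarrow> p (Suc k) = p k" for k
    using assms[of k] unfolding bond_point_def attached_def by simp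
  obtain m where stable: "\<And>k. p k = p m \<Longrightarrow> p (Suc k) = p m"
  proof (cases "\<exists>m. p m \<notin> C")
    case True
    then show ?thesis using step_out that by metis
  next
    case False
    then show ?thesis using step_in that by metis
  qed
  have "p (m + n) = p m" for n
    by (induction n) (simp_all add: stable)
  then show ?thesis using that by (metis le_add_diff_inverse)
qed

end

locale indeterminate_adjunction_with =
  fixes Y :: "'a topology" and X :: "'a set" and A :: "nat \<Rightarrow> 'a set" and x :: "nat \<Rightarrow> 'a"
    and N :: "nat \<Rightarrow> 'a set"
  assumes closedin_X: "closedin Y X"
    and openin_N: "\<And>j. openin Y (N j)"
    and disjoint_N: "\<And>i j. i \<noteq> j \<Longrightarrow> N i \<inter> N j = {}"
    and Union_N: "(\<Union>j. N j) = topspace Y - X"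
    and A_eq_closure: "\<And>j. A j = Y closure_of N j"
    and A_Int_X: "\<And>j. A j \<inter> X = {x j}"

lemma indeterminate_adjunction_iff:
  "indeterminate_adjunction Y X A x \<longleftrightarrow> (\<exists>N. indeterminate_adjunction_with Y X A x N)"
  unfolding indeterminate_adjunction_def indeterminate_adjunction_with_def by blast

context indeterminate_adjunction_with
begin

lemma N_Int_X: "N j \<inter> X = {}"
  using Union_N by blast

lemma N_subset: "N j \<subseteq> topspace Y"
  using Union_N by blast

lemma attachment_in_X: "x j \<in> X"
  using A_Int_X by blast

lemma closedin_A: "closedin Y (A j)"
  by (simp add: A_eq_closure)

lemma A_eq: "A j = insert (x j) (N j)"
proof
  show "insert (x j) (N j) \<subseteq> A j"
    using A_Int_X[of j] closure_of_subset[OF N_subset, of j] A_eq_closure[of j] by blast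
  show "A j \<subseteq> insert (x j) (N j)"
  proof
    fix a
    assume a: "a \<in> A j"
    show "a \<in> insert (x j) (N j)"
    proof (cases "a \<in> X")
      case True
      then show ?thesis using a A_Int_X[of j] by blast
    next
      case False
      have "a \<in> topspace Y"
        using a closure_of_subset_topspace[of Y "N j"] unfolding A_eq_closure by blast
      then obtain i where i: "a \<in> N i"
        using Union_N False by blast
      have "i = j"
      proof (rule ccontr)
        assume "i \<noteq> j"
        then have "N i \<inter> N j = {}"
          by (rule disjoint_N)
        then have "N i \<inter> Y closure_of N j = {}"
          by (simp add: openin_Int_closure_of_eq_empty[OF openin_N[of i]])
        then show False
          using i a unfolding A_eq_closure by blast
      qed
      then show ?thesis using i by blast
    qed
  qed
qed

lemma N_Int_A:
  assumes "i \<noteq> j"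
  shows "N i \<inter> A j = {}"
  using disjoint_N[OF assms] N_Int_X[of i] attachment_in_X[of j] by (auto simp: A_eq[of j])

lemma A_Int_A:
  assumes "i \<noteq> j"
  shows "A i \<inter> A j \<subseteq> {x i}"
  using N_Int_A[OF assms] by (auto simp: A_eq[of i])

lemma attachment_in_connectedin:
  assumes S: "connectedin Y S" and meets: "S \<inter> N i \<noteq> {}" and "\<not> S \<subseteq> N i"
  shows "x i \<in> S"
proof (rule ccontr)
  assume "x i \<notin> S"
  moreover have "S \<subseteq> topspace Y"
    using S connectedin_subset_topspace by blast
  ultimately have cover: "S \<subseteq> N i \<union> (topspace Y - A i)"
    and outside: "(topspace Y - A i) \<inter> S \<noteq> {}"
    using assms(3) A_eq[of i] by auto
  have disjoint: "N i \<inter> (topspace Y - A i) \<inter> S = {}"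
    using A_eq[of i] by auto
  have "openin Y (topspace Y - A i)"
    using closedin_A by blast
  moreover have "\<not> (\<exists>E1 E2. openin Y E1 \<and> openin Y E2 \<and> S \<subseteq> E1 \<union> E2 \<and>
      E1 \<inter> E2 \<inter> S = {} \<and> E1 \<inter> S \<noteq> {} \<and> E2 \<inter> S \<noteq> {})"
    using S unfolding connectedin by blast
  ultimately show False
    using openin_N[of i] cover outside disjoint meets by (metis inf_commute)
qed

definition piece_index :: "'a \<Rightarrow> nat" where
  "piece_index z = (SOME j. z \<in> N j)"

lemma piece_index_eq:
  assumes "z \<in> N j"
  shows "piece_index z = j"
proof -
  have "z \<in> N (piece_index z)"
    unfolding piece_index_def using assms by (rule someI)
  then show ?thesis
    using assms disjoint_N[of "piece_index z" j] by blast
qed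

lemma mem_N_piece_index:
  assumes "z \<in> topspace Y" "z \<notin> X"
  shows "z \<in> N (piece_index z)"
proof -
  obtain j where "z \<in> N j"
    using assms Union_N by blast
  moreover from this have "piece_index z = j"
    by (rule piece_index_eq)
  ultimately show ?thesis by simp
qed

definition core_retraction :: "'a \<Rightarrow> 'a" where
  "core_retraction z = (if z \<in> X then z else x (piece_index z))"

lemma core_retraction_N: "z \<in> N j \<Longrightarrow> core_retraction z = x j"
  using N_Int_X[of j] piece_index_eq[of z j] unfolding core_retraction_def by auto

lemma core_retraction_connectedin:
  assumes S: "connectedin Y S" and "S \<inter> X \<noteq> {}" and z: "z \<in> S"
  shows "core_retraction z \<in> S"
proof (cases "z \<in> X")
  case True
  then show ?thesis using z unfolding core_retraction_def by simp
next
  case False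
  have "z \<in> topspace Y"
    using S z connectedin_subset_topspace by blast
  then have zN: "z \<in> N (piece_index z)"
    using False by (rule mem_N_piece_index)
  moreover have "\<not> S \<subseteq> N (piece_index z)"
    using assms(2) N_Int_X[of "piece_index z"] by blast
  ultimately have "x (piece_index z) \<in> S"
    using attachment_in_connectedin[OF S] z by blast
  then show ?thesis
    by (simp add: core_retraction_N[OF zN])
qed

end

locale peano_subcontinuum = indeterminate_adjunction_with +
  fixes Z :: "'a set"
  assumes Z_subset: "Z \<subseteq> topspace Y"
    and peano: "peano_continuum (subtopology Y Z)"
    and Z_meets_X: "Z \<inter> X \<noteq> {}"
    and Z_meets_A: "\<And>j. Z \<inter> (A j - {x j}) \<noteq> {}"
begin

lemma connectedin_Z: "connectedin Y Z"
  using peano Z_subset unfolding peano_continuum_def connectedin_def by auto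

lemma attachment_in_Z: "x j \<in> Z"
proof -
  have "Z \<inter> N j \<noteq> {}"
    using Z_meets_A[of j] A_eq[of j] by auto
  moreover have "\<not> Z \<subseteq> N j"
    using Z_meets_X N_Int_X[of j] by blast
  ultimately show ?thesis
    by (rule attachment_in_connectedin[OF connectedin_Z])
qed

sublocale subspace_adjunction Y "Z \<inter> X" "\<lambda>j. Z \<inter> A j" x
proof
  show "Z \<inter> X \<subseteq> topspace Y" "Z \<inter> A j \<subseteq> topspace Y" for j
    using Z_subset by blast+
  show "x j \<in> Z \<inter> X" for j
    using attachment_in_Z attachment_in_X by blast
  show "Z \<inter> X \<inter> (Z \<inter> A j) \<subseteq> {x j}" for j
    using A_Int_X[of j] by blast
  show "Z \<inter> A i \<inter> (Z \<inter> A j) \<subseteq> {x i}" if "i \<noteq> j" for i j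
    using A_Int_A[OF that] by blast
qed

lemma core_retraction_in_core: "z \<in> Z \<Longrightarrow> core_retraction z \<in> Z \<inter> X"
  using attachment_in_Z attachment_in_X unfolding core_retraction_def by auto

lemma core_retraction_local_preimage:
  assumes z: "z \<in> Z" and V: "openin Y V" and zV: "core_retraction z \<in> V"
  obtains G where "openin (subtopology Y Z) G" "z \<in> G" "\<And>u. u \<in> G \<Longrightarrow> core_retraction u \<in> V"
proof (cases "z \<in> X")
  case False
  define j where "j = piece_index z"
  have zN: "z \<in> N j"
    unfolding j_def using z Z_subset False by (intro mem_N_piece_index) auto
  show ?thesis
  proof (rule that)
    show "openin (subtopology Y Z) (N j \<inter> Z)"
      using openin_subtopology_Int[OF openin_N] .
    show "core_retraction u \<in> V" if "u \<in> N j \<inter> Z" for u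
      using that zV core_retraction_N[OF zN] core_retraction_N[of u j] by simp
  qed (use z zN in blast)
next
  case True
  then have "z \<in> V \<inter> Z"
    using z zV unfolding core_retraction_def by simp
  then obtain G where G: "openin (subtopology Y Z) G" "connectedin (subtopology Y Z) G"
    "z \<in> G" "G \<subseteq> V \<inter> Z"
    using peano locally_path_connected_imp_locally_connected_space openin_subtopology_Int[OF V]
    unfolding peano_continuum_def locally_connected_space by meson
  then have "connectedin Y G" and "G \<inter> X \<noteq> {}"
    using True connectedin_subtopology by blast+
  then have "core_retraction u \<in> V" if "u \<in> G" for u
    using core_retraction_connectedin G(4) that by blast
  with G show ?thesis
    using that by blast
qed

lemma continuous_map_core_retraction:
  "continuous_map (subtopology Y Z) core core_retraction"
  unfolding continuous_map_def
proof (intro conjI allI impI)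
  show "core_retraction \<in> topspace (subtopology Y Z) \<rightarrow> topspace core"
    using core_retraction_in_core Z_subset by auto
  fix U
  assume "openin core U"
  then obtain V where V: "openin Y V" and U: "U = V \<inter> (Z \<inter> X)"
    unfolding openin_subtopology by blast
  let ?Q = "{z \<in> topspace (subtopology Y Z). core_retraction z \<in> U}"
  show "openin (subtopology Y Z) ?Q"
    unfolding openin_subopen[of _ ?Q]
  proof
    fix z
    assume "z \<in> ?Q"
    then have z: "z \<in> Z" and zV: "core_retraction z \<in> V"
      using U by auto
    obtain G where G: "openin (subtopology Y Z) G" "z \<in> G"
      and GV: "\<And>u. u \<in> G \<Longrightarrow> core_retraction u \<in> V"
      using core_retraction_local_preimage[OF z V zV] by blast
    have "G \<subseteq> ?Q"
      using GV core_retraction_in_core openin_subset[OF G(1)] U by auto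
    with G show "\<exists>G. openin (subtopology Y Z) G \<and> z \<in> G \<and> G \<subseteq> ?Q"
      by blast
  qed
qed

lemma N_Int_attached: "N k \<inter> attached k = {}"
  unfolding attached_def using N_Int_X[of k] N_Int_A[of k] by fastforce

definition stage_retraction :: "nat \<Rightarrow> 'a \<Rightarrow> 'a" where
  "stage_retraction k z = (if \<exists>j<k. z \<in> N j then z else core_retraction z)"

lemma stage_retraction_in_attached:
  assumes "z \<in> Z"
  shows "stage_retraction k z \<in> attached k"
  using assms core_retraction_in_core A_eq
  unfolding stage_retraction_def attached_def by auto

lemma bond_point_stage_retraction:
  assumes z: "z \<in> Z"
  shows "bond_point k (stage_retraction (Suc k) z) = stage_retraction k z"
proof (cases "z \<in> N k")
  case True
  then have "z \<notin> attached k"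
    using N_Int_attached by blast
  moreover have "\<not> (\<exists>j<k. z \<in> N j)"
    using True disjoint_N[of _ k] by (metis disjoint_iff less_not_refl)
  ultimately show ?thesis
    using True core_retraction_N[OF True] unfolding bond_point_def stage_retraction_def by auto
next
  case False
  then have "(\<exists>j<Suc k. z \<in> N j) \<longleftrightarrow> (\<exists>j<k. z \<in> N j)"
    using less_Suc_eq by auto
  then show ?thesis
    using stage_retraction_in_attached[OF z]
    unfolding bond_point_def stage_retraction_def by simp
qed

lemma stage_retraction_eventually_id:
  assumes "z \<in> Z"
  obtains m where "\<And>k. m \<le> k \<Longrightarrow> stage_retraction k z = z"
proof (cases "z \<in> X")
  case True
  then show ?thesis
    using that unfolding stage_retraction_def core_retraction_def by simp
next
  case False
  then have zN: "z \<in> N (piece_index z)"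
    using assms Z_subset mem_N_piece_index by blast
  show ?thesis
  proof (rule that)
    fix k
    assume "Suc (piece_index z) \<le> k"
    then have "piece_index z < k"
      by simp
    with zN show "stage_retraction k z = z"
      unfolding stage_retraction_def by auto
  qed
qed

lemma thread_eq_stage_retraction:
  assumes attached: "\<And>k. p k \<in> attached k" and bond: "\<And>k. p k = bond_point k (p (Suc k))"
  obtains z where "z \<in> Z" "\<And>k. p k = stage_retraction k z"
proof -
  obtain m where m: "\<And>k. m \<le> k \<Longrightarrow> p k = p m"
    using thread_eventually_constant[OF bond] by blast
  have Z: "p m \<in> Z"
    using attached[of m] unfolding attached_def by blast
  obtain m' where m': "\<And>k. m' \<le> k \<Longrightarrow> stage_retraction k (p m) = p m"
    using stage_retraction_eventually_id[OF Z] by blast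
  have "p k = stage_retraction k (p m)" for k
  proof (rule backward_recursion_unique[where f = bond_point and m = "max m m'"
        and q = "\<lambda>k. stage_retraction k (p m)"])
    show "p k = bond_point k (p (Suc k))" for k
      by (rule bond)
    show "stage_retraction k (p m) = bond_point k (stage_retraction (Suc k) (p m))" for k
      using bond_point_stage_retraction[OF Z] by simp
    show "p k = stage_retraction k (p m)" if "max m m' \<le> k" for k
      using m[of k] m'[of k] that by simp
  qed
  with Z that show ?thesis by blast
qed

lemma stage_retraction_outside:
  "z \<notin> (\<Union>j<k. N j) \<Longrightarrow> stage_retraction k z = core_retraction z"
  unfolding stage_retraction_def by auto

lemma stage_retraction_A:
  assumes "j < k" "z \<in> A j"
  shows "stage_retraction k z = z"
  using assms A_eq[of j] attachment_in_X[of j]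
  unfolding stage_retraction_def core_retraction_def by auto

definition stage_piece :: "nat \<Rightarrow> nat option \<Rightarrow> 'a set" where
  "stage_piece k i = (case i of None \<Rightarrow> Z - (\<Union>j<k. N j) | Some j \<Rightarrow> Z \<inter> A j)"

lemma stage_piece_subset: "stage_piece k i \<subseteq> Z"
  unfolding stage_piece_def by (auto split: option.split)

lemma Union_stage_piece: "(\<Union>i \<in> insert None (Some ` {..<k}). stage_piece k i) = Z"
  using stage_piece_subset A_eq by (auto simp: stage_piece_def)

lemma closedin_stage_piece: "closedin (subtopology Y Z) (stage_piece k i)"
proof (cases i)
  case None
  have "closedin (subtopology Y Z) (Z \<inter> (topspace Y - (\<Union>j<k. N j)))"
    using openin_N by (intro closedin_subtopology_Int_closed) blast
  moreover have "Z \<inter> (topspace Y - (\<Union>j<k. N j)) = Z - (\<Union>j<k. N j)"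
    using Z_subset by blast
  ultimately show ?thesis
    using None by (simp add: stage_piece_def)
next
  case (Some j)
  then show ?thesis
    using closedin_subtopology_Int_closed[OF closedin_A] by (simp add: stage_piece_def)
qed

lemma continuous_map_stage_coordinate_piece:
  assumes i: "i \<in> insert None (Some ` {..<k})"
  shows "continuous_map (subtopology Y (stage_piece k i)) (stage k)
    (\<lambda>z. fibre k (stage_retraction k z))"
proof (cases i)
  case None
  have "continuous_map core (stage k) (fibre k)"
    using continuous_map_fibre_adj_pieces[of None k] by (simp add: adj_pieces_def)
  then have "continuous_map (subtopology (subtopology Y Z) (stage_piece k i)) (stage k)
      (fibre k \<circ> core_retraction)"
    by (intro continuous_map_compose[OF continuous_map_from_subtopology[OF continuous_map_core_retraction]])
  then show ?thesis
    using None stage_piece_subset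
    by (auto simp: subtopology_subtopology Int_absorb1 stage_piece_def stage_retraction_outside
        intro: continuous_map_eq)
next
  case (Some j)
  then have "j < k"
    using i by blast
  have "continuous_map (subtopology Y (Z \<inter> A j)) (stage k) (fibre k)"
    using continuous_map_fibre_adj_pieces[of "Some j" k] \<open>j < k\<close> by (simp add: adj_pieces_def)
  then show ?thesis
    using Some stage_retraction_A[OF \<open>j < k\<close>]
    by (auto simp: stage_piece_def intro: continuous_map_eq)
qed

lemma continuous_map_stage_coordinate:
  "continuous_map (subtopology Y Z) (stage k) (\<lambda>z. fibre k (stage_retraction k z))"
proof (rule pasting_lemma_closed[where I = "insert None (Some ` {..<k})" and T = "stage_piece k"])
  show "continuous_map (subtopology (subtopology Y Z) (stage_piece k i)) (stage k)
      (\<lambda>z. fibre k (stage_retraction k z))" if "i \<in> insert None (Some ` {..<k})" for i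
    using continuous_map_stage_coordinate_piece[OF that] stage_piece_subset
    by (simp add: subtopology_subtopology Int_absorb1)
  show "\<exists>i. i \<in> insert None (Some ` {..<k}) \<and> z \<in> stage_piece k i \<and>
      fibre k (stage_retraction k z) = fibre k (stage_retraction k z)"
    if "z \<in> topspace (subtopology Y Z)" for z
    using that Union_stage_piece[of k] by auto
qed (simp_all add: closedin_stage_piece)

definition adj_coordinates :: "'a \<Rightarrow> nat \<Rightarrow> (nat option \<times> 'a) set" where
  "adj_coordinates z = (\<lambda>k. fibre k (stage_retraction k z))"

lemma adj_coordinates_image: "adj_coordinates ` Z = topspace Adj"
proof
  show "adj_coordinates ` Z \<subseteq> topspace Adj"
  proof
    fix y
    assume "y \<in> adj_coordinates ` Z"
    then obtain z where z: "z \<in> Z" and y: "y = adj_coordinates z"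
      by blast
    show "y \<in> topspace Adj"
      unfolding y adj_coordinates_def
      using stage_retraction_in_attached[OF z] bond_point_stage_retraction[OF z, symmetric]
      by (rule thread_in_shrinking_adjunction)
  qed
  show "topspace Adj \<subseteq> adj_coordinates ` Z"
  proof
    fix y
    assume "y \<in> topspace Adj"
    then obtain p where attached: "\<And>k. p k \<in> attached k"
      and bond: "\<And>k. p k = bond_point k (p (Suc k))" and y: "y = (\<lambda>k. fibre k (p k))"
      using shrinking_adjunction_threadE by blast
    obtain z where "z \<in> Z" "\<And>k. p k = stage_retraction k z"
      using thread_eq_stage_retraction[OF attached bond] by blast
    then show "y \<in> adj_coordinates ` Z"
      unfolding y adj_coordinates_def by auto
  qed
qed

lemma inj_on_adj_coordinates: "inj_on adj_coordinates Z"
proof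
  fix z z'
  assume z: "z \<in> Z" and z': "z' \<in> Z" and eq: "adj_coordinates z = adj_coordinates z'"
  obtain m where m: "\<And>k. m \<le> k \<Longrightarrow> stage_retraction k z = z"
    using stage_retraction_eventually_id[OF z] by blast
  obtain m' where m': "\<And>k. m' \<le> k \<Longrightarrow> stage_retraction k z' = z'"
    using stage_retraction_eventually_id[OF z'] by blast
  define k where "k = max m m'"
  have "fibre k (stage_retraction k z) = fibre k (stage_retraction k z')"
    using eq unfolding adj_coordinates_def by metis
  then have "stage_retraction k z = stage_retraction k z'"
    by (rule fibre_inject[OF stage_retraction_in_attached[OF z]])
  then show "z = z'"
    using m[of k] m'[of k] unfolding k_def by simp
qed

lemma continuous_map_adj_coordinates: "continuous_map (subtopology Y Z) Adj adj_coordinates"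
proof -
  have "continuous_map (subtopology Y Z) (product_topology stage UNIV) adj_coordinates"
    unfolding continuous_map_componentwise_UNIV adj_coordinates_def
    using continuous_map_stage_coordinate by simp
  moreover have "adj_coordinates \<in> topspace (subtopology Y Z) \<rightarrow> topspace Adj"
    using adj_coordinates_image by auto
  then have "adj_coordinates \<in> topspace (subtopology Y Z) \<rightarrow> {y. (\<forall>k. y k \<in> topspace (stage k)) \<and>
      (\<forall>k. adj_bond core x pieces k (y (Suc k)) = y k)}"
    by (simp only: topspace_shrinking_adjunction)
  ultimately show ?thesis
    unfolding shrinking_adjunction_def continuous_map_in_subtopology by blast
qed

lemma homeomorphic_map_adj_coordinates:
  assumes "Hausdorff_space Y"
  shows "homeomorphic_map (subtopology Y Z) Adj adj_coordinates"
proof (rule continuous_imp_homeomorphic_map[OF continuous_map_adj_coordinates])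
  show "compact_space (subtopology Y Z)"
    using peano unfolding peano_continuum_def by simp
  show "Hausdorff_space Adj"
    using assms by (rule Hausdorff_space_shrinking_adjunction)
  show "adj_coordinates ` topspace (subtopology Y Z) = topspace Adj"
    using adj_coordinates_image Z_subset by (simp add: Int_absorb1)
  show "inj_on adj_coordinates (topspace (subtopology Y Z))"
    using inj_on_adj_coordinates Z_subset by (simp add: Int_absorb1)
qed

end

theorem proposition3p15:
  fixes Y :: "'a topology" and X :: "'a set" and A :: "nat \<Rightarrow> 'a set"
    and x :: "nat \<Rightarrow> 'a" and Z :: "'a set"
  assumes "Hausdorff_space Y"
    and "indeterminate_adjunction Y X A x"
    and "Z \<subseteq> topspace Y"
    and "peano_continuum (subtopology Y Z)"
    and "Z \<inter> X \<noteq> {}"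
    and "\<And>j. Z \<inter> (A j - {x j}) \<noteq> {}"
  shows "subtopology Y Z homeomorphic_space
           shrinking_adjunction (subtopology Y (Z \<inter> X)) x (\<lambda>j. subtopology Y (Z \<inter> A j))"
proof -
  obtain N where N: "indeterminate_adjunction_with Y X A x N"
    using assms(2) indeterminate_adjunction_iff by blast
  interpret peano_subcontinuum Y X A x N Z
    by (intro peano_subcontinuum.intro peano_subcontinuum_axioms.intro N assms(3-6))
  show ?thesis
    using homeomorphic_map_adj_coordinates[OF assms(1)] homeomorphic_map_imp_homeomorphic_space
    by blast
qed

end
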